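(* Let $n\ge 4$, let $s_i=(i,i+1)\in S_n$, and let $\pi:S_n\to\mathrm{O}(V)$ be a real representation. Put $h_\pi=\frac{\chi_\pi(1)-\chi_\pi(s_1s_3)}{2}$. Let $1\le i,k\le n-1$ with $|i-k|>1$, and let $c_i,c_k\in\mathrm{Pin}(V)$ satisfy $\rho(c_i)=\pi(s_i)$, $\rho(c_k)=\pi(s_k)$ and $c_i^2=c_k^2=1$. Then $c_ic_k=c_kc_i$ if and only if $h_\pi$ is a multiple of $4$.
   Context: $V$ is a Euclidean space and $\chi_\pi$ the character of $\pi$. $\mathrm{Pin}(V)$ is the Pin group of $V$ defined inside the Clifford algebra $C(V)$ (tensor algebra modulo the ideal generated by $v\otimes v+|v|^2$), and $\rho:\mathrm{Pin}(V)\to\mathrm{O}(V)$ is the standard double cover with kernel $\{\pm1\}$, sending a unit vector $v$ to the reflection in $v^\perp$. *)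

theory Defs
  imports "HOL-Analysis.Analysis"
begin

text \<open>Euclidean space V = R^'d (standard inner product, orthonormal basis indexed by
the finite linearly ordered type 'd). The Clifford algebra C(V) (tensor algebra modulo
the ideal generated by v*v + |v|^2) is realised concretely on the basis e_A, A a subset
of 'd, with e_i e_i = -1 and e_i e_j = - e_j e_i for i different from j.\<close>

type_synonym 'd cliff = "'d set \<Rightarrow> real"

definition cl_sign :: "'d::{finite,linorder} set \<Rightarrow> 'd set \<Rightarrow> real" where
  "cl_sign A B = (-1) ^ card {(a, b). a \<in> A \<and> b \<in> B \<and> b < a} * (-1) ^ card (A \<inter> B)"

definition cl_mult :: "'d::{finite,linorder} cliff \<Rightarrow> 'd cliff \<Rightarrow> 'd cliff" where
  "cl_mult x y = (\<lambda>C. \<Sum>A\<in>UNIV. \<Sum>B\<in>UNIV.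
      if (A - B) \<union> (B - A) = C then cl_sign A B * x A * y B else 0)"

definition cl_one :: "'d::{finite,linorder} cliff" where
  "cl_one = (\<lambda>A. if A = {} then 1 else 0)"

definition cl_vec :: "real^'d::{finite,linorder} \<Rightarrow> 'd cliff" where
  "cl_vec v = (\<lambda>A. \<Sum>i\<in>UNIV. if A = {i} then v $ i else 0)"

definition cl_alpha :: "'d::{finite,linorder} cliff \<Rightarrow> 'd cliff" where
  "cl_alpha x = (\<lambda>A. (-1) ^ card A * x A)"

definition cl_inv :: "'d::{finite,linorder} cliff \<Rightarrow> 'd cliff" where
  "cl_inv x = (THE y. cl_mult x y = cl_one \<and> cl_mult y x = cl_one)"

inductive pin :: "'d::{finite,linorder} cliff \<Rightarrow> bool" where
  pin_one: "pin cl_one"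
| pin_step: "pin x \<Longrightarrow> norm v = 1 \<Longrightarrow> pin (cl_mult x (cl_vec v))"

text \<open>The double cover rho : Pin(V) \<rightarrow> O(V), rho(x)(w) = alpha(x) w x^{-1}, as a matrix
(column j is the image of the j-th basis vector).\<close>
definition cl_rho :: "('d::{finite,linorder}) cliff \<Rightarrow> real^('d::{finite,linorder})^('d::{finite,linorder})" where
  "cl_rho x = (\<chi> i j. cl_mult (cl_mult (cl_alpha x) (cl_vec (axis j 1))) (cl_inv x) {i})"

definition adj_transp :: "nat \<Rightarrow> nat \<Rightarrow> nat" where
  "adj_transp i = (\<lambda>x. if x = i then i + 1 else if x = i + 1 then i else x)"

definition orth_rep :: "nat \<Rightarrow> ((nat \<Rightarrow> nat) \<Rightarrow> real^('d::finite)^'d) \<Rightarrow> bool" where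
  "orth_rep n \<pi> \<longleftrightarrow>
     (\<forall>p. p permutes {1..n} \<longrightarrow> orthogonal_matrix (\<pi> p)) \<and>
     (\<forall>p q. p permutes {1..n} \<longrightarrow> q permutes {1..n} \<longrightarrow> \<pi> (p \<circ> q) = \<pi> p ** \<pi> q)"

definition character :: "((nat \<Rightarrow> nat) \<Rightarrow> real^('d::finite)^'d) \<Rightarrow> (nat \<Rightarrow> nat) \<Rightarrow> real" where
  "character \<pi> g = trace (\<pi> g)"

end

theory Submission
  imports Defs
begin

(*
  Let M and N be the images of s_i and s_k: commuting symmetric involutions of V.
  Choose orthonormal bases A, B, C of the joint eigenspaces of (M, N) for the
  eigenvalue pairs (-1,-1), (-1,1), (1,-1). An involution of Pin(V) lying over M
  is determined by M up to a scalar, since the elements acting trivially by the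
  twisted adjoint action are scalars; hence c_i and c_k are multiples of the
  Clifford products e_A e_B and e_A e_C. Moving orthogonal vectors past each other,
  these commute iff |A||B| + |A||C| + |B||C| is even.
  Counting eigenvalues, trace M = n - 2(|A| + |B|), trace N = n - 2(|A| + |C|) and
  trace (M N) = n - 2(|B| + |C|). Since s_i and s_k are conjugate, |B| = |C|; since
  s_i s_k is conjugate to s_1 s_3, h_pi = (n - trace (M N)) / 2 = 2 |B|. So both
  conditions say that |B| is even.
*)

section \<open>Orthonormal lists and commuting involutions\<close>

definition orthonormal_list :: "('a::real_inner) list \<Rightarrow> bool" where
  "orthonormal_list L \<longleftrightarrow> distinct L \<and> (\<forall>v\<in>set L. norm v = 1) \<and>
     (\<forall>v\<in>set L. \<forall>w\<in>set L. v \<noteq> w \<longrightarrow> v \<bullet> w = 0)"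

lemma orthonormal_list_inner_self: "orthonormal_list L \<Longrightarrow> v \<in> set L \<Longrightarrow> v \<bullet> v = 1"
  unfolding orthonormal_list_def by (simp add: power2_norm_eq_inner[symmetric])

lemma orthonormal_list_append_orthogonal:
  assumes "orthonormal_list (P @ Q)" "v \<in> set P" "w \<in> set Q"
  shows "v \<bullet> w = 0"
proof -
  have "v \<noteq> w"
    using assms unfolding orthonormal_list_def by auto
  then show ?thesis
    using assms unfolding orthonormal_list_def by auto
qed

definition eigenspace :: "real^'n^'n \<Rightarrow> real \<Rightarrow> (real^'n) set" where
  "eigenspace M a = {w. M *v w = a *\<^sub>R w}"

lemma subspace_eigenspace: "subspace (eigenspace M a)"
  unfolding subspace_def eigenspace_def
  by (auto simp: matrix_vector_right_distrib matrix_vector_mult_scaleR scaleR_add_right)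

lemma eigenspace_orthogonal:
  assumes "transpose M = M" "u \<in> eigenspace M a" "v \<in> eigenspace M b" "a \<noteq> b"
  shows "u \<bullet> v = 0"
proof -
  have "(M *v u) \<bullet> v = u \<bullet> (M *v v)"
    by (metis assms(1) dot_lmul_matrix vector_transpose_matrix)
  then have "a * (u \<bullet> v) = b * (u \<bullet> v)"
    using assms(2,3) unfolding eigenspace_def by simp
  then show ?thesis using assms(4) by simp
qed

lemma involution_eigenvectors:
  assumes "N ** N = mat 1"
  shows "(1/2) *\<^sub>R (w - N *v w) \<in> eigenspace N (-1)" "(1/2) *\<^sub>R (w + N *v w) \<in> eigenspace N 1"
  using assms unfolding eigenspace_def
  by (simp_all add: matrix_vector_right_distrib matrix_vector_mult_scaleR matrix_vector_mul_assoc algebra_simps)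

lemma eigenspace_commuting_involution_split:
  assumes "M ** N = N ** M" "N ** N = mat 1"
  shows "eigenspace M a =
    {u + v | u v. u \<in> eigenspace M a \<inter> eigenspace N (-1) \<and> v \<in> eigenspace M a \<inter> eigenspace N 1}"
proof (intro equalityI subsetI)
  fix w assume w: "w \<in> eigenspace M a"
  have "M *v (N *v w) = N *v (M *v w)"
    by (simp add: matrix_vector_mul_assoc assms(1))
  then have MN: "M *v (N *v w) = a *\<^sub>R (N *v w)"
    using w unfolding eigenspace_def by (simp add: matrix_vector_mult_scaleR)
  let ?u = "(1/2) *\<^sub>R (w - N *v w)" and ?v = "(1/2) *\<^sub>R (w + N *v w)"
  have "?u \<in> eigenspace M a" "?v \<in> eigenspace M a"
    using w MN unfolding eigenspace_def
    by (simp_all add: matrix_vector_right_distrib matrix_vector_mult_scaleR algebra_simps)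
  moreover have "w = ?u + ?v"
    by (simp add: vec_eq_iff field_simps)
  ultimately show "w \<in> {u + v | u v. u \<in> eigenspace M a \<inter> eigenspace N (-1) \<and> v \<in> eigenspace M a \<inter> eigenspace N 1}"
    using involution_eigenvectors[OF assms(2)] by blast
next
  fix w assume "w \<in> {u + v | u v. u \<in> eigenspace M a \<inter> eigenspace N (-1) \<and> v \<in> eigenspace M a \<inter> eigenspace N 1}"
  then show "w \<in> eigenspace M a"
    using subspace_add[OF subspace_eigenspace] by blast
qed

lemma eigenspace_mult_Int:
  assumes "M ** N = N ** M" "a * a = 1"
  shows "eigenspace (M ** N) b \<inter> eigenspace M a = eigenspace M a \<inter> eigenspace N (a * b)"
proof -
  have "(M ** N) *v w = b *\<^sub>R w \<longleftrightarrow> N *v w = (a * b) *\<^sub>R w" if "M *v w = a *\<^sub>R w" for w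
  proof -
    have "(M ** N) *v w = N *v (M *v w)"
      by (simp add: matrix_vector_mul_assoc assms(1))
    then have "(M ** N) *v w = a *\<^sub>R (N *v w)"
      using that by (simp add: matrix_vector_mult_scaleR)
    then show ?thesis
      using assms(2) by (auto simp: algebra_simps) (metis scaleR_scaleR scaleR_one mult.commute)+
  qed
  then show ?thesis unfolding eigenspace_def by blast
qed

lemma subspace_orthonormal_list:
  fixes S :: "(real^'n) set"
  assumes "subspace S"
  obtains L where "orthonormal_list L" "span (set L) = S"
proof -
  obtain B where B: "pairwise orthogonal B" "\<And>x. x \<in> B \<Longrightarrow> norm x = 1" "independent B" "span B = S"
    using orthonormal_basis_subspace[OF assms] by metis
  obtain L where L: "set L = B" "distinct L"
    using finite_distinct_list[OF independent_imp_finite[OF B(3)]] by blast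
  have "orthonormal_list L"
    using B L by (auto simp: orthonormal_list_def pairwise_def orthogonal_def)
  moreover have "span (set L) = S"
    using B L by simp
  ultimately show thesis by (rule that)
qed

lemma orthonormal_list_append:
  assumes "orthonormal_list P" "orthonormal_list Q" "\<forall>v\<in>set P. \<forall>w\<in>set Q. v \<bullet> w = 0"
  shows "orthonormal_list (P @ Q)"
proof -
  have "set P \<inter> set Q = {}"
    using assms unfolding orthonormal_list_def by (metis disjoint_iff inner_eq_zero_iff norm_zero zero_neq_one)
  then show ?thesis
    using assms unfolding orthonormal_list_def by auto (metis inner_commute)+
qed

lemma orthonormal_list_expansion:
  assumes "orthonormal_list L" "p \<in> span (set L)"
  shows "(\<Sum>f\<in>set L. (f \<bullet> p) *\<^sub>R f) = p"
  using assms(2)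
proof (induction rule: span_induct)
  case (step g)
  have "(\<Sum>f\<in>set L. (f \<bullet> g) *\<^sub>R f) = (\<Sum>f\<in>set L. if f = g then g else 0)"
    using assms(1) step unfolding orthonormal_list_def
    by (intro sum.cong refl) (auto simp: power2_norm_eq_inner[symmetric])
  then show ?case using step by simp
next
  case base
  show ?case unfolding subspace_def
    by (simp add: inner_add_right scaleR_add_left sum.distrib flip: scaleR_sum_right scaleR_scaleR)
qed

lemma commuting_symmetric_involutions_mult:
  fixes M N :: "real^'n^'n"
  assumes "transpose M = M" "transpose N = N" "M ** M = mat 1" "N ** N = mat 1" "M ** N = N ** M"
  shows "transpose (M ** N) = M ** N" "(M ** N) ** (M ** N) = mat 1"
proof -
  have "transpose (M ** N) = N ** M"
    using assms(1,2) by (simp add: matrix_transpose_mul)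
  then show "transpose (M ** N) = M ** N"
    using assms(5) by simp
  have "(M ** N) ** (M ** N) = (M ** M) ** (N ** N)"
    by (metis assms(5) matrix_mul_assoc)
  then show "(M ** N) ** (M ** N) = mat 1"
    using assms(3,4) by simp
qed

text \<open>\<open>M\<close> is the identity minus twice the orthogonal projection onto its \<open>-1\<close>-eigenspace.\<close>
lemma trace_symmetric_involution:
  fixes M :: "real^'n^'n"
  assumes "transpose M = M" "M ** M = mat 1" "orthonormal_list L" "span (set L) = eigenspace M (-1)"
  shows "trace M = real CARD('n) - 2 * real (length L)"
proof -
  have M_eq: "M *v w = w - 2 *\<^sub>R (\<Sum>f\<in>set L. (f \<bullet> w) *\<^sub>R f)" for w
  proof -
    define p where "p = (1/2) *\<^sub>R (w - M *v w)"
    define q where "q = (1/2) *\<^sub>R (w + M *v w)"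
    have "p \<in> eigenspace M (-1)" "q \<in> eigenspace M 1"
      unfolding p_def q_def by (rule involution_eigenvectors[OF assms(2)])+
    have "w = p + q"
      by (simp add: p_def q_def vec_eq_iff field_simps)
    have "f \<bullet> q = 0" if "f \<in> set L" for f
      using that assms(4) \<open>q \<in> eigenspace M 1\<close> span_base[of f "set L"]
      by (intro eigenspace_orthogonal[OF assms(1)]) auto
    then have "(\<Sum>f\<in>set L. (f \<bullet> w) *\<^sub>R f) = (\<Sum>f\<in>set L. (f \<bullet> p) *\<^sub>R f)"
      by (intro sum.cong refl) (simp add: \<open>w = p + q\<close> inner_add_right)
    also have "\<dots> = p"
      using \<open>p \<in> eigenspace M (-1)\<close> assms(4) by (intro orthonormal_list_expansion[OF assms(3)]) auto
    finally have "2 *\<^sub>R (\<Sum>f\<in>set L. (f \<bullet> w) *\<^sub>R f) = w - M *v w"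
      by (simp add: p_def)
    then show ?thesis
      by (simp add: algebra_simps)
  qed
  have "trace M = (\<Sum>i\<in>UNIV. (M *v axis i 1) $ i)"
    unfolding trace_def by (simp add: matrix_vector_mult_basis column_def)
  also have "\<dots> = (\<Sum>i\<in>UNIV. 1 - 2 * (\<Sum>f\<in>set L. f $ i * f $ i))"
    unfolding M_eq by (simp add: inner_axis)
  also have "\<dots> = real CARD('n) - 2 * (\<Sum>f\<in>set L. f \<bullet> f)"
    by (simp add: sum_subtractf sum_distrib_left inner_vec_def sum.swap[of _ "set L"])
  also have "(\<Sum>f\<in>set L. f \<bullet> f) = (\<Sum>f\<in>set L. 1)"
    using orthonormal_list_inner_self[OF assms(3)] by simp
  also have "\<dots> = real (length L)"
    using assms(3) by (simp add: orthonormal_list_def distinct_card)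
  finally show ?thesis .
qed

lemma symmetric_involutions_eigenbases:
  fixes M N :: "real^'n^'n"
  assumes "transpose M = M" "transpose N = N" "M ** M = mat 1" "N ** N = mat 1" "M ** N = N ** M"
  obtains A B C where "orthonormal_list (A @ B @ C)"
    "span (set (A @ B)) = eigenspace M (-1)" "span (set (A @ C)) = eigenspace N (-1)"
    "span (set (B @ C)) = eigenspace (M ** N) (-1)"
proof -
  obtain A where A: "orthonormal_list A" "span (set A) = eigenspace M (-1) \<inter> eigenspace N (-1)"
    by (rule subspace_orthonormal_list[OF subspace_inter[OF subspace_eigenspace subspace_eigenspace]])
  obtain B where B: "orthonormal_list B" "span (set B) = eigenspace M (-1) \<inter> eigenspace N 1"
    by (rule subspace_orthonormal_list[OF subspace_inter[OF subspace_eigenspace subspace_eigenspace]])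
  obtain C where C: "orthonormal_list C" "span (set C) = eigenspace M 1 \<inter> eigenspace N (-1)"
    by (rule subspace_orthonormal_list[OF subspace_inter[OF subspace_eigenspace subspace_eigenspace]])
  have sets: "set A \<subseteq> eigenspace M (-1) \<inter> eigenspace N (-1)" "set B \<subseteq> eigenspace M (-1) \<inter> eigenspace N 1"
    "set C \<subseteq> eigenspace M 1 \<inter> eigenspace N (-1)"
    using A(2) B(2) C(2) span_superset by blast+
  have orth: "\<forall>u\<in>set P. \<forall>v\<in>set Q. u \<bullet> v = 0"
    if "set P \<subseteq> eigenspace M a \<inter> eigenspace N b" "set Q \<subseteq> eigenspace M a' \<inter> eigenspace N b'"
      "a \<noteq> a' \<or> b \<noteq> b'"
    for P Q :: "(real^'n) list" and a b a' b'
    using that eigenspace_orthogonal[OF assms(1)] eigenspace_orthogonal[OF assms(2)] by blast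
  have BC: "orthonormal_list (B @ C)"
    using orth[OF sets(2,3)] by (intro orthonormal_list_append[OF B(1) C(1)]) simp
  have "\<forall>v\<in>set A. \<forall>w\<in>set (B @ C). v \<bullet> w = 0"
    using orth[OF sets(1,2)] orth[OF sets(1,3)] by auto
  then have ABC: "orthonormal_list (A @ B @ C)"
    by (rule orthonormal_list_append[OF A(1) BC])
  have MN_M: "(M ** N) ** M = M ** (M ** N)"
    by (simp add: matrix_mul_assoc assms(5))
  have "span (set (A @ B)) = eigenspace M (-1)"
    using eigenspace_commuting_involution_split[OF assms(5,4), of "-1"]
    unfolding set_append span_Un A(2) B(2) by (rule sym)
  moreover have "span (set (A @ C)) = eigenspace N (-1)"
    using eigenspace_commuting_involution_split[OF assms(5)[symmetric] assms(3), of "-1"]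
    unfolding set_append span_Un A(2) C(2) Int_commute[of "eigenspace M _"] by (rule sym)
  moreover have "span (set (B @ C)) = eigenspace (M ** N) (-1)"
  proof -
    have "eigenspace (M ** N) (-1) \<inter> eigenspace M (-1) = span (set B)"
      "eigenspace (M ** N) (-1) \<inter> eigenspace M 1 = span (set C)"
      using eigenspace_mult_Int[OF assms(5), of "-1" "-1"] eigenspace_mult_Int[OF assms(5), of 1 "-1"] B(2) C(2)
      by simp_all
    then show ?thesis
      using eigenspace_commuting_involution_split[OF MN_M assms(3), of "-1"]
      unfolding set_append span_Un by simp
  qed
  ultimately show thesis using ABC that by blast
qed

section \<open>The Clifford product\<close>

definition symdiff :: "'a set \<Rightarrow> 'a set \<Rightarrow> 'a set" where
  "symdiff A B = (A - B) \<union> (B - A)"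

lemma symdiff_eq_iff: "symdiff A B = C \<longleftrightarrow> B = symdiff A C"
  unfolding symdiff_def by blast

lemma symdiff_cancel_left: "symdiff A (symdiff A B) = B"
  unfolding symdiff_def by blast

lemma symdiff_assoc: "symdiff (symdiff A B) C = symdiff A (symdiff B C)"
  unfolding symdiff_def by blast

lemma symdiff_commute: "symdiff A B = symdiff B A"
  unfolding symdiff_def by blast

lemma symdiff_self [simp]: "symdiff A A = {}"
  unfolding symdiff_def by blast

lemma symdiff_empty [simp]: "symdiff A {} = A" "symdiff {} A = A"
  unfolding symdiff_def by blast+

lemma symdiff_Int_left: "symdiff A B \<inter> C = symdiff (A \<inter> C) (B \<inter> C)"
  unfolding symdiff_def by auto

lemma symdiff_Int_right: "C \<inter> symdiff A B = symdiff (C \<inter> A) (C \<inter> B)"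
  unfolding symdiff_def by auto

lemma card_symdiff:
  assumes "finite A" "finite B"
  shows "card (symdiff A B) + 2 * card (A \<inter> B) = card A + card B"
proof -
  have "card (symdiff A B) = card (A - B) + card (B - A)"
    unfolding symdiff_def using assms by (intro card_Un_disjoint) auto
  moreover have "card A = card (A \<inter> B) + card (A - B)" "card B = card (B \<inter> A) + card (B - A)"
    using assms by (simp_all add: card_Int_Diff)
  ultimately show ?thesis by (simp add: Int_commute)
qed

lemma minus_one_power_card_symdiff:
  assumes "finite A" "finite B"
  shows "(-1::real) ^ card (symdiff A B) = (-1) ^ card A * (-1) ^ card B"
proof -
  have "(-1::real) ^ card (symdiff A B) = (-1) ^ (card (symdiff A B) + 2 * card (A \<inter> B))"
    by (simp add: power_add power_mult)
  also have "\<dots> = (-1) ^ card A * (-1) ^ card B"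
    by (simp add: card_symdiff[OF assms] power_add)
  finally show ?thesis .
qed

lemma sum_symdiff_reindex: "(\<Sum>B\<in>UNIV. f B) = (\<Sum>B\<in>(UNIV :: 'a::finite set set). f (symdiff A B))"
  by (rule sum.reindex_bij_witness[where i = "symdiff A" and j = "symdiff A"])
    (auto simp: symdiff_cancel_left)

lemma cl_mult_altdef:
  "cl_mult x y C = (\<Sum>A\<in>UNIV. cl_sign A (symdiff A C) * x A * y (symdiff A C))"
proof -
  have "cl_mult x y C =
      (\<Sum>A\<in>UNIV. \<Sum>B\<in>UNIV. if B = symdiff A C then cl_sign A B * x A * y B else 0)"
    unfolding cl_mult_def symdiff_def[symmetric] by (simp only: symdiff_eq_iff)
  then show ?thesis by simp
qed

definition inversions :: "'a::linorder set \<Rightarrow> 'a set \<Rightarrow> ('a \<times> 'a) set" where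
  "inversions A B = {(a, b). a \<in> A \<and> b \<in> B \<and> b < a}"

lemma cl_sign_altdef: "cl_sign A B = (-1) ^ card (inversions A B) * (-1) ^ card (A \<inter> B)"
  unfolding cl_sign_def inversions_def by simp

lemma inversions_symdiff_left: "inversions (symdiff A B) C = symdiff (inversions A C) (inversions B C)"
  unfolding inversions_def symdiff_def by auto

lemma inversions_symdiff_right: "inversions C (symdiff A B) = symdiff (inversions C A) (inversions C B)"
  unfolding inversions_def symdiff_def by auto

lemma cl_sign_symdiff_left:
  "cl_sign (symdiff A B) (C :: 'd::{finite,linorder} set) = cl_sign A C * cl_sign B C"
  unfolding cl_sign_altdef inversions_symdiff_left symdiff_Int_left
  by (simp add: minus_one_power_card_symdiff mult_ac)

lemma cl_sign_symdiff_right: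
  "cl_sign C (symdiff A B) = cl_sign (C :: 'd::{finite,linorder} set) A * cl_sign C B"
  unfolding cl_sign_altdef inversions_symdiff_right symdiff_Int_right
  by (simp add: minus_one_power_card_symdiff mult_ac)

lemma cl_sign_empty [simp]: "cl_sign {} A = 1" "cl_sign A {} = 1"
  unfolding cl_sign_def by simp_all

lemma cl_sign_nonzero [simp]: "cl_sign A B \<noteq> 0"
  unfolding cl_sign_def by simp

lemma cl_sign_cocycle:
  "cl_sign A B * cl_sign (symdiff A B) C = cl_sign A (symdiff B C) * cl_sign B (C :: 'd::{finite,linorder} set)"
  by (simp add: cl_sign_symdiff_left cl_sign_symdiff_right mult_ac)

lemma cl_mult_assoc: "cl_mult (cl_mult x y) z = cl_mult x (cl_mult y (z :: 'd::{finite,linorder} cliff))"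
proof
  fix D
  have "cl_mult (cl_mult x y) z D = (\<Sum>C\<in>UNIV. \<Sum>A\<in>UNIV.
      cl_sign C (symdiff C D) * cl_sign A (symdiff A C) * x A * y (symdiff A C) * z (symdiff C D))"
    unfolding cl_mult_altdef[of _ _ D] cl_mult_altdef[of x y]
    by (simp add: sum_distrib_left sum_distrib_right mult_ac)
  also have "\<dots> = (\<Sum>A\<in>UNIV. \<Sum>C\<in>UNIV.
      cl_sign C (symdiff C D) * cl_sign A (symdiff A C) * x A * y (symdiff A C) * z (symdiff C D))"
    by (rule sum.swap)
  also have "\<dots> = (\<Sum>A\<in>UNIV. \<Sum>B\<in>UNIV. cl_sign (symdiff A B) (symdiff (symdiff A B) D) *
      cl_sign A B * x A * y B * z (symdiff (symdiff A B) D))"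
  proof (rule sum.cong[OF refl])
    fix A
    show "(\<Sum>C\<in>UNIV. cl_sign C (symdiff C D) * cl_sign A (symdiff A C) * x A * y (symdiff A C) *
        z (symdiff C D)) =
      (\<Sum>B\<in>UNIV. cl_sign (symdiff A B) (symdiff (symdiff A B) D) * cl_sign A B * x A * y B *
        z (symdiff (symdiff A B) D))"
      by (subst sum_symdiff_reindex[where A = A]) (simp add: symdiff_cancel_left)
  qed
  also have "\<dots> = (\<Sum>A\<in>UNIV. \<Sum>B\<in>UNIV. cl_sign A (symdiff A D) * cl_sign B (symdiff B (symdiff A D)) *
      x A * y B * z (symdiff B (symdiff A D)))"
  proof (intro sum.cong refl)
    fix A B :: "'d set"
    have "symdiff (symdiff A B) D = symdiff B (symdiff A D)"
      unfolding symdiff_def by blast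
    moreover have "cl_sign A B * cl_sign (symdiff A B) (symdiff B (symdiff A D)) =
        cl_sign A (symdiff A D) * cl_sign B (symdiff B (symdiff A D))"
      using cl_sign_cocycle[of A B "symdiff B (symdiff A D)"] by (simp add: symdiff_cancel_left)
    ultimately show "cl_sign (symdiff A B) (symdiff (symdiff A B) D) * cl_sign A B * x A * y B *
        z (symdiff (symdiff A B) D) =
      cl_sign A (symdiff A D) * cl_sign B (symdiff B (symdiff A D)) * x A * y B *
        z (symdiff B (symdiff A D))"
      by (simp add: mult_ac)
  qed
  also have "\<dots> = cl_mult x (cl_mult y z) D"
    unfolding cl_mult_altdef[of _ _ D] cl_mult_altdef[of y z]
    by (simp add: sum_distrib_left sum_distrib_right mult_ac)
  finally show "cl_mult (cl_mult x y) z D = cl_mult x (cl_mult y z) D" .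
qed

lemma cl_mult_one_left [simp]: "cl_mult cl_one x = (x :: 'd::{finite,linorder} cliff)"
proof
  fix C
  have "cl_mult cl_one x C = (\<Sum>A\<in>UNIV. if A = {} then cl_sign A (symdiff A C) * x (symdiff A C) else 0)"
    unfolding cl_mult_altdef cl_one_def by (rule sum.cong) auto
  then show "cl_mult cl_one x C = x C" by simp
qed

lemma cl_mult_one_right [simp]: "cl_mult x cl_one = (x :: 'd::{finite,linorder} cliff)"
proof
  fix C
  have "cl_mult x cl_one C = (\<Sum>A\<in>UNIV. if A = C then cl_sign A (symdiff A C) * x A else 0)"
    unfolding cl_mult_altdef cl_one_def by (rule sum.cong) (auto simp: symdiff_def)
  then show "cl_mult x cl_one C = x C" by simp
qed

lemma cl_mult_zero_left [simp]: "cl_mult (\<lambda>A. 0) x = (\<lambda>C. 0)"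
  unfolding cl_mult_altdef by simp

lemma cl_mult_zero_right [simp]: "cl_mult x (\<lambda>A. 0) = (\<lambda>C. 0)"
  unfolding cl_mult_altdef by simp

lemma cl_mult_add_left: "cl_mult (\<lambda>A. x A + y A) z = (\<lambda>C. cl_mult x z C + cl_mult y z C)"
  unfolding cl_mult_altdef by (simp add: algebra_simps sum.distrib)

lemma cl_mult_add_right: "cl_mult z (\<lambda>A. x A + y A) = (\<lambda>C. cl_mult z x C + cl_mult z y C)"
  unfolding cl_mult_altdef by (simp add: algebra_simps sum.distrib)

lemma cl_mult_diff_left: "cl_mult (\<lambda>A. x A - y A) z = (\<lambda>C. cl_mult x z C - cl_mult y z C)"
  unfolding cl_mult_altdef by (simp add: algebra_simps sum_subtractf)

lemma cl_mult_scale_left: "cl_mult (\<lambda>A. c * x A) z = (\<lambda>C. c * cl_mult x z C)"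
  unfolding cl_mult_altdef by (simp add: algebra_simps sum_distrib_left)

lemma cl_mult_scale_right: "cl_mult z (\<lambda>A. c * x A) = (\<lambda>C. c * cl_mult z x C)"
  unfolding cl_mult_altdef by (simp add: algebra_simps sum_distrib_left)

lemma cl_mult_minus_left: "cl_mult (\<lambda>A. - x A) z = (\<lambda>C. - cl_mult x z C)"
  unfolding cl_mult_altdef by (simp add: sum_negf)

lemma cl_mult_minus_right: "cl_mult z (\<lambda>A. - x A) = (\<lambda>C. - cl_mult z x C)"
  unfolding cl_mult_altdef by (simp add: sum_negf)

lemma cl_mult_sum_left: "cl_mult (\<lambda>A. \<Sum>j\<in>J. f j A) z = (\<lambda>C. \<Sum>j\<in>J. cl_mult (f j) z C)"
  unfolding cl_mult_altdef
  by (simp add: sum_distrib_left sum_distrib_right mult_ac sum.swap[of _ J])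

lemma cl_mult_sum_right: "cl_mult z (\<lambda>A. \<Sum>j\<in>J. f j A) = (\<lambda>C. \<Sum>j\<in>J. cl_mult z (f j) C)"
  unfolding cl_mult_altdef
  by (simp add: sum_distrib_left sum_distrib_right mult_ac sum.swap[of _ J])

lemma cl_inv_unique:
  assumes "cl_mult x y = cl_one" "cl_mult y x = (cl_one :: 'd::{finite,linorder} cliff)"
  shows "cl_inv x = y"
  unfolding cl_inv_def
proof (rule the_equality)
  show "cl_mult x y = cl_one \<and> cl_mult y x = cl_one" using assms by simp
  fix z assume z: "cl_mult x z = cl_one \<and> cl_mult z x = cl_one"
  then have "z = cl_mult (cl_mult y x) z" by (simp add: assms)
  also have "\<dots> = y" by (simp add: cl_mult_assoc z)
  finally show "z = y" .
qed

section \<open>Blades and vectors\<close>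

definition cl_blade :: "'d set \<Rightarrow> 'd set \<Rightarrow> real" where
  "cl_blade S = (\<lambda>A. if A = S then 1 else 0)"

lemma cl_mult_blade: "cl_mult (cl_blade S) (cl_blade T) = (\<lambda>C. cl_sign S T * cl_blade (symdiff S T) C)"
proof
  fix C
  have "cl_mult (cl_blade S) (cl_blade T) C =
      (\<Sum>A\<in>UNIV. if A = S then (if symdiff A C = T then cl_sign A (symdiff A C) else 0) else 0)"
    unfolding cl_mult_altdef cl_blade_def by (rule sum.cong) auto
  then show "cl_mult (cl_blade S) (cl_blade T) C = cl_sign S T * cl_blade (symdiff S T) C"
    by (auto simp: cl_blade_def symdiff_eq_iff symdiff_cancel_left)
qed

lemma cl_mult_blade_singleton_left:
  "cl_mult (cl_blade {j}) x C = cl_sign {j} (symdiff {j} C) * x (symdiff {j} C)"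
proof -
  have "cl_mult (cl_blade {j}) x C =
      (\<Sum>A\<in>UNIV. if A = {j} then cl_sign {j} (symdiff {j} C) * x (symdiff {j} C) else 0)"
    unfolding cl_mult_altdef cl_blade_def by (intro sum.cong refl) auto
  then show ?thesis by simp
qed

lemma cl_mult_blade_singleton_right:
  "cl_mult x (cl_blade {j}) C = cl_sign (symdiff {j} C) {j} * x (symdiff {j} C)"
proof -
  have "cl_mult x (cl_blade {j}) C =
      (\<Sum>A\<in>UNIV. if A = symdiff {j} C then cl_sign A {j} * x A else 0)"
    unfolding cl_mult_altdef cl_blade_def by (intro sum.cong refl) (auto simp: symdiff_def)
  then show ?thesis by simp
qed

lemma cl_vec_eq_sum_blades: "cl_vec v = (\<lambda>A. \<Sum>i\<in>UNIV. v $ i * cl_blade {i} A)"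
  unfolding cl_vec_def cl_blade_def by (intro ext sum.cong) auto

lemma cl_vec_axis: "cl_vec (axis j 1) = cl_blade {j}"
proof
  fix A
  have "(if A = {i} then axis j 1 $ i else 0) = (if i = j then cl_blade {j} A else 0)" for i
    by (auto simp: axis_def cl_blade_def)
  then show "cl_vec (axis j 1) A = cl_blade {j} A"
    unfolding cl_vec_def by simp
qed

lemma cl_vec_singleton [simp]: "cl_vec u {l} = u $ l"
  unfolding cl_vec_def by simp

lemma cl_vec_zero: "cl_vec 0 = (\<lambda>A. 0)"
  unfolding cl_vec_def by (rule ext) (simp cong: if_cong)

lemma cl_vec_add: "cl_vec (v + w) = (\<lambda>A. cl_vec v A + cl_vec w A)"
  unfolding cl_vec_def by (auto simp: fun_eq_iff sum.distrib[symmetric] intro!: sum.cong)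

lemma cl_vec_diff: "cl_vec (v - w) = (\<lambda>A. cl_vec v A - cl_vec w A)"
  unfolding cl_vec_def by (auto simp: fun_eq_iff sum_subtractf[symmetric] intro!: sum.cong)

lemma cl_vec_minus: "cl_vec (- v) = (\<lambda>A. - cl_vec v A)"
  unfolding cl_vec_def by (auto simp: fun_eq_iff sum_negf[symmetric] intro!: sum.cong)

lemma cl_vec_scaleR: "cl_vec (c *\<^sub>R v) = (\<lambda>A. c * cl_vec v A)"
  unfolding cl_vec_def by (auto simp: fun_eq_iff sum_distrib_left intro!: sum.cong)

lemma cl_vec_matrix_vector_mult:
  "cl_vec (M *v w) = (\<lambda>A. \<Sum>j\<in>UNIV. w $ j * cl_vec (M *v axis j 1) A)"
proof
  fix A
  have col: "(M *v axis j 1) $ i = M $ i $ j" for i j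
    by (simp add: matrix_vector_mult_basis column_def)
  have "(\<Sum>j\<in>UNIV. w $ j * cl_vec (M *v axis j 1) A) =
      (\<Sum>j\<in>UNIV. \<Sum>i\<in>UNIV. if A = {i} then M $ i $ j * w $ j else 0)"
    unfolding cl_vec_def col sum_distrib_left by (intro sum.cong refl) (simp add: mult_ac)
  also have "\<dots> = (\<Sum>i\<in>UNIV. \<Sum>j\<in>UNIV. if A = {i} then M $ i $ j * w $ j else 0)"
    by (rule sum.swap)
  also have "\<dots> = cl_vec (M *v w) A"
    unfolding cl_vec_def by (intro sum.cong refl) (simp add: matrix_vector_mult_def)
  finally show "cl_vec (M *v w) A = (\<Sum>j\<in>UNIV. w $ j * cl_vec (M *v axis j 1) A)" ..
qed

lemma cl_sign_singletons: "cl_sign {i} {j} = (if j \<le> i then -1 else (1::real))"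
proof -
  have "{(a, b). a \<in> {i} \<and> b \<in> {j} \<and> b < a} = (if j < i then {(i, j)} else {})"
    by auto
  then show ?thesis unfolding cl_sign_def by auto
qed

lemma cl_vec_anticommute:
  "cl_mult (cl_vec v) (cl_vec w) C + cl_mult (cl_vec w) (cl_vec v) C = -2 * (v \<bullet> w) * cl_one C"
proof -
  have vw: "cl_mult (cl_vec v) (cl_vec w) C =
      (\<Sum>i\<in>UNIV. \<Sum>j\<in>UNIV. v $ i * w $ j * (cl_sign {i} {j} * cl_blade (symdiff {i} {j}) C))"
    unfolding cl_vec_eq_sum_blades cl_mult_sum_left cl_mult_sum_right cl_mult_scale_left
      cl_mult_scale_right cl_mult_blade
    by (simp add: mult_ac)
  have wv: "cl_mult (cl_vec w) (cl_vec v) C =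
      (\<Sum>i\<in>UNIV. \<Sum>j\<in>UNIV. v $ i * w $ j * (cl_sign {j} {i} * cl_blade (symdiff {i} {j}) C))"
    unfolding cl_vec_eq_sum_blades cl_mult_sum_left cl_mult_sum_right cl_mult_scale_left
      cl_mult_scale_right cl_mult_blade
    by (subst sum.swap) (simp add: mult_ac symdiff_commute)
  have "cl_mult (cl_vec v) (cl_vec w) C + cl_mult (cl_vec w) (cl_vec v) C =
      (\<Sum>i\<in>UNIV. \<Sum>j\<in>UNIV. if j = i then -2 * v $ i * w $ i * cl_one C else 0)"
    unfolding vw wv sum.distrib[symmetric]
    by (intro sum.cong refl) (auto simp: cl_sign_singletons algebra_simps cl_blade_def cl_one_def)
  also have "\<dots> = -2 * (v \<bullet> w) * cl_one C"
    by (simp add: inner_vec_def sum_distrib_left sum_distrib_right mult_ac)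
  finally show ?thesis .
qed

lemma cl_vec_orthogonal_anticommute:
  assumes "v \<bullet> w = 0"
  shows "cl_mult (cl_vec v) (cl_vec w) = (\<lambda>C. - cl_mult (cl_vec w) (cl_vec v) C)"
proof
  fix C
  show "cl_mult (cl_vec v) (cl_vec w) C = - cl_mult (cl_vec w) (cl_vec v) C"
    using cl_vec_anticommute[of v w C] assms by (simp add: eq_neg_iff_add_eq_0)
qed

lemma cl_vec_unit_square: "norm v = 1 \<Longrightarrow> cl_mult (cl_vec v) (cl_vec v) = (\<lambda>C. - cl_one C)"
  using cl_vec_anticommute[of v v] by (auto simp: fun_eq_iff power2_norm_eq_inner[symmetric])

lemma cl_vec_unit_inverse:
  assumes "norm v = 1"
  shows "cl_mult (cl_vec v) (cl_vec (- v)) = cl_one" "cl_mult (cl_vec (- v)) (cl_vec v) = cl_one"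
  by (simp_all add: cl_vec_minus cl_mult_minus_left cl_mult_minus_right cl_vec_unit_square[OF assms])

lemma cl_vec_reflect:
  assumes "norm v = 1"
  shows "cl_mult (cl_mult (cl_vec v) (cl_vec w)) (cl_vec v) = cl_vec (w - (2 * (v \<bullet> w)) *\<^sub>R v)"
proof -
  have "cl_mult (cl_vec v) (cl_vec w) =
      (\<lambda>C. - cl_mult (cl_vec w) (cl_vec v) C + (-2 * (v \<bullet> w)) * cl_one C)"
  proof
    fix C
    show "cl_mult (cl_vec v) (cl_vec w) C = - cl_mult (cl_vec w) (cl_vec v) C + (-2 * (v \<bullet> w)) * cl_one C"
      using cl_vec_anticommute[of v w C] by linarith
  qed
  then show ?thesis
    by (simp add: cl_mult_diff_left cl_mult_minus_left cl_mult_scale_left cl_mult_assoc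
      cl_vec_unit_square[OF assms] cl_mult_minus_right cl_vec_diff cl_vec_scaleR)
qed

section \<open>The grading automorphism and the twisted adjoint action\<close>

lemma cl_alpha_mult: "cl_alpha (cl_mult x y) = cl_mult (cl_alpha x) (cl_alpha (y :: 'd::{finite,linorder} cliff))"
proof
  fix C
  show "cl_alpha (cl_mult x y) C = cl_mult (cl_alpha x) (cl_alpha y) C"
    unfolding cl_alpha_def cl_mult_altdef sum_distrib_left
  proof (rule sum.cong[OF refl])
    fix A :: "'d set"
    let ?s = "cl_sign A (symdiff A C) * x A * y (symdiff A C)"
    have "cl_sign A (symdiff A C) * ((-1) ^ card A * x A) * ((-1) ^ card (symdiff A C) * y (symdiff A C)) =
        ((-1) ^ card A * (-1) ^ card A) * (-1) ^ card C * ?s"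
      by (simp add: minus_one_power_card_symdiff mult_ac)
    also have "\<dots> = (-1) ^ card C * ?s"
      by (simp flip: power_add add: mult_2[symmetric] power_mult)
    finally show "(-1) ^ card C * ?s =
      cl_sign A (symdiff A C) * ((-1) ^ card A * x A) * ((-1) ^ card (symdiff A C) * y (symdiff A C))"
      by (rule sym)
  qed
qed

lemma cl_alpha_one [simp]: "cl_alpha cl_one = cl_one"
  unfolding cl_alpha_def cl_one_def by auto

lemma cl_alpha_vec: "cl_alpha (cl_vec v) = (\<lambda>A. - cl_vec v A)"
  unfolding cl_alpha_def cl_vec_def fun_eq_iff sum_distrib_left sum_negf[symmetric]
  by (intro allI sum.cong) auto

lemma pin_twisted_conj_vec:
  assumes "pin (x :: 'd::{finite,linorder} cliff)"
  shows "\<exists>x'. cl_mult x x' = cl_one \<and> cl_mult x' x = cl_one \<and>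
    (\<forall>w. \<exists>u. cl_mult (cl_mult (cl_alpha x) (cl_vec w)) x' = cl_vec u)"
  using assms
proof induction
  case pin_one
  show ?case by (rule exI[of _ cl_one]) auto
next
  case (pin_step x v)
  then obtain x' where x': "cl_mult x x' = cl_one" "cl_mult x' x = cl_one"
    and conj: "\<forall>w. \<exists>u. cl_mult (cl_mult (cl_alpha x) (cl_vec w)) x' = cl_vec u"
    by blast
  define y where "y = cl_mult (cl_vec (- v)) x'"
  have "cl_mult (cl_mult x (cl_vec v)) y = cl_mult x (cl_mult (cl_mult (cl_vec v) (cl_vec (- v))) x')"
    unfolding y_def by (simp add: cl_mult_assoc)
  then have right_inv: "cl_mult (cl_mult x (cl_vec v)) y = cl_one"
    using pin_step(2) by (simp add: cl_vec_unit_inverse x')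
  have "cl_mult y (cl_mult x (cl_vec v)) = cl_mult (cl_vec (- v)) (cl_mult (cl_mult x' x) (cl_vec v))"
    unfolding y_def by (simp add: cl_mult_assoc)
  then have left_inv: "cl_mult y (cl_mult x (cl_vec v)) = cl_one"
    using pin_step(2) by (simp add: cl_vec_unit_inverse x')
  have "\<exists>u. cl_mult (cl_mult (cl_alpha (cl_mult x (cl_vec v))) (cl_vec w)) y = cl_vec u" for w
  proof -
    obtain u where u: "cl_mult (cl_mult (cl_alpha x) (cl_vec (w - (2 * (v \<bullet> w)) *\<^sub>R v))) x' = cl_vec u"
      using conj by blast
    have "cl_mult (cl_mult (cl_alpha (cl_mult x (cl_vec v))) (cl_vec w)) y =
      cl_mult (cl_mult (cl_alpha x) (cl_mult (cl_mult (cl_vec v) (cl_vec w)) (cl_vec v))) x'"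
      unfolding y_def cl_alpha_mult cl_alpha_vec cl_vec_minus
      by (simp add: cl_mult_assoc cl_mult_minus_left cl_mult_minus_right)
    also have "\<dots> = cl_vec u"
      unfolding cl_vec_reflect[OF pin_step(2)] u ..
    finally show ?thesis by blast
  qed
  then show ?case using right_inv left_inv by blast
qed

text \<open>For an involution \<open>c\<close> in \<open>Pin(V)\<close> we have \<open>c\<^sup>-\<^sup>1 = c\<close>, so the definition
  of \<open>cl_rho\<close> becomes an intertwining relation.\<close>
lemma cl_rho_involution_intertwines:
  assumes "pin (c :: 'd::{finite,linorder} cliff)" "cl_mult c c = cl_one" "cl_rho c = M"
  shows "cl_mult (cl_alpha c) (cl_vec w) = cl_mult (cl_vec (M *v w)) c"
proof -
  obtain c' where c': "cl_mult c c' = cl_one" "cl_mult c' c = cl_one"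
    and conj: "\<forall>w. \<exists>u. cl_mult (cl_mult (cl_alpha c) (cl_vec w)) c' = cl_vec u"
    using pin_twisted_conj_vec[OF assms(1)] by blast
  have "cl_inv c = c'" by (rule cl_inv_unique[OF c'])
  moreover have inv: "cl_inv c = c" by (rule cl_inv_unique[OF assms(2) assms(2)])
  ultimately have "c' = c" by simp
  have basis: "cl_mult (cl_alpha c) (cl_vec (axis j 1)) = cl_mult (cl_vec (M *v axis j 1)) c" for j
  proof -
    obtain u where u: "cl_mult (cl_mult (cl_alpha c) (cl_vec (axis j 1))) c = cl_vec u"
      using conj \<open>c' = c\<close> by blast
    have "u $ l = (M *v axis j 1) $ l" for l
    proof -
      have "u $ l = cl_mult (cl_mult (cl_alpha c) (cl_vec (axis j 1))) (cl_inv c) {l}"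
        using u inv by simp
      also have "\<dots> = M $ l $ j"
        using assms(3) unfolding cl_rho_def by auto
      finally show ?thesis
        by (simp add: matrix_vector_mult_basis column_def)
    qed
    then have "u = M *v axis j 1" by (simp add: vec_eq_iff)
    moreover have "cl_mult (cl_alpha c) (cl_vec (axis j 1)) =
        cl_mult (cl_mult (cl_mult (cl_alpha c) (cl_vec (axis j 1))) c) c"
      by (simp add: cl_mult_assoc assms(2))
    ultimately show ?thesis by (simp only: u)
  qed
  have "cl_mult (cl_alpha c) (cl_vec w) = (\<lambda>C. \<Sum>j\<in>UNIV. w $ j * cl_mult (cl_alpha c) (cl_vec (axis j 1)) C)"
    using cl_vec_matrix_vector_mult[of "mat 1" w]
    by (simp add: cl_mult_sum_right cl_mult_scale_right)
  also have "\<dots> = cl_mult (cl_vec (M *v w)) c"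
    unfolding basis cl_vec_matrix_vector_mult[of M w] by (simp add: cl_mult_sum_left cl_mult_scale_left)
  finally show ?thesis .
qed

section \<open>The twisted centre\<close>

lemma card_inversions_singleton_right: "card (inversions A {j}) = card {a\<in>A. j < a}"
proof -
  have "inversions A {j} = (\<lambda>a. (a, j)) ` {a\<in>A. j < a}"
    unfolding inversions_def by auto
  then show ?thesis by (simp add: card_image inj_on_def)
qed

lemma card_inversions_singleton_left: "card (inversions {j} A) = card {b\<in>A. b < j}"
proof -
  have "inversions {j} A = (\<lambda>b. (j, b)) ` {b\<in>A. b < j}"
    unfolding inversions_def by auto
  then show ?thesis by (simp add: card_image inj_on_def)
qed

text \<open>Moving \<open>e\<^sub>j\<close> across the blade \<open>e\<^sub>A\<close> with \<open>j \<in> A\<close>: the twist \<open>(-1)\<^bsup>|A|\<^esup>\<close> of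
  \<open>cl_alpha\<close> is off by exactly one sign.\<close>
lemma cl_sign_singleton_swap:
  assumes "j \<in> (A :: 'd::{finite,linorder} set)"
  shows "(-1) ^ card A * cl_sign A {j} = - cl_sign {j} A"
proof -
  define a where "a = card {x\<in>A. j < x}"
  define b where "b = card {x\<in>A. x < j}"
  have "A = insert j ({x\<in>A. j < x} \<union> {x\<in>A. x < j})"
    using assms by auto
  then have "card A = card (insert j ({x\<in>A. j < x} \<union> {x\<in>A. x < j}))"
    by (rule arg_cong)
  also have "\<dots> = Suc (card ({x\<in>A. j < x} \<union> {x\<in>A. x < j}))"
    by (rule card_insert_disjoint) auto
  also have "card ({x\<in>A. j < x} \<union> {x\<in>A. x < j}) = a + b"
    unfolding a_def b_def by (rule card_Un_disjoint) auto
  finally have card_A: "card A = Suc (a + b)" .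
  have int: "A \<inter> {j} = {j}" "{j} \<inter> A = {j}"
    using assms by auto
  have "(-1::real) ^ card A * cl_sign A {j} = (-1) ^ b * ((-1) ^ a * (-1) ^ a)"
    unfolding card_A cl_sign_altdef card_inversions_singleton_right int a_def
    by (simp add: power_add mult_ac)
  also have "\<dots> = (-1) ^ b"
    by (simp flip: power_add add: mult_2[symmetric] power_mult)
  also have "\<dots> = - cl_sign {j} A"
    unfolding cl_sign_altdef card_inversions_singleton_left int b_def by simp
  finally show ?thesis .
qed

lemma twisted_central_eq_scalar:
  assumes "\<And>j. cl_mult (cl_alpha z) (cl_vec (axis j 1)) = cl_mult (cl_vec (axis j 1)) (z :: 'd::{finite,linorder} cliff)"
  shows "z = (\<lambda>A. z {} * cl_one A)"
proof
  fix A
  show "z A = z {} * cl_one A"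
  proof (cases "A = {}")
    case True
    then show ?thesis by (simp add: cl_one_def)
  next
    case False
    then obtain j where j: "j \<in> A" by blast
    have "cl_mult (cl_alpha z) (cl_blade {j}) (symdiff {j} A) = cl_mult (cl_blade {j}) z (symdiff {j} A)"
      using assms[of j] unfolding cl_vec_axis by simp
    then have "cl_sign A {j} * ((-1) ^ card A * z A) = cl_sign {j} A * z A"
      unfolding cl_mult_blade_singleton_right cl_mult_blade_singleton_left symdiff_cancel_left cl_alpha_def .
    then have "- cl_sign {j} A * z A = cl_sign {j} A * z A"
      using cl_sign_singleton_swap[OF j] by (simp add: mult_ac)
    then have "z A = 0" by simp
    then show ?thesis using False by (simp add: cl_one_def)
  qed
qed

section \<open>Products of orthonormal vectors\<close>

fun cl_prod :: "(real^'d::{finite,linorder}) list \<Rightarrow> 'd cliff" where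
  "cl_prod [] = cl_one"
| "cl_prod (v # L) = cl_mult (cl_vec v) (cl_prod L)"

lemma cl_prod_append: "cl_prod (L @ L') = cl_mult (cl_prod L) (cl_prod L')"
  by (induction L) (simp_all add: cl_mult_assoc)

lemma cl_alpha_cl_prod: "cl_alpha (cl_prod L) = (\<lambda>A. (-1) ^ length L * cl_prod L A)"
  by (induction L) (simp_all add: cl_alpha_mult cl_alpha_vec cl_mult_minus_left cl_mult_scale_right)

lemma cl_prod_orthogonal_vec_commute:
  assumes "\<forall>v\<in>set L. v \<bullet> w = 0"
  shows "cl_mult (cl_prod L) (cl_vec w) = (\<lambda>C. (-1) ^ length L * cl_mult (cl_vec w) (cl_prod L) C)"
  using assms
proof (induction L)
  case Nil
  then show ?case by simp
next
  case (Cons v L)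
  then have IH: "cl_mult (cl_prod L) (cl_vec w) = (\<lambda>C. (-1) ^ length L * cl_mult (cl_vec w) (cl_prod L) C)"
    and "v \<bullet> w = 0" by auto
  have "cl_mult (cl_prod (v # L)) (cl_vec w) =
      (\<lambda>C. (-1) ^ length L * cl_mult (cl_mult (cl_vec v) (cl_vec w)) (cl_prod L) C)"
    by (simp add: cl_mult_assoc IH cl_mult_scale_right)
  also have "\<dots> = (\<lambda>C. (-1) ^ length (v # L) * cl_mult (cl_vec w) (cl_prod (v # L)) C)"
    unfolding cl_vec_orthogonal_anticommute[OF \<open>v \<bullet> w = 0\<close>] by (simp add: cl_mult_minus_left cl_mult_assoc)
  finally show ?case .
qed

lemma cl_prod_member_commute:
  assumes "orthonormal_list L" "f \<in> set L"
  shows "cl_mult (cl_prod L) (cl_vec f) = (\<lambda>C. - ((-1) ^ length L * cl_mult (cl_vec f) (cl_prod L) C))"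
  using assms
proof (induction L)
  case Nil
  then show ?case by simp
next
  case (Cons v L)
  have L: "orthonormal_list L"
    using Cons.prems(1) unfolding orthonormal_list_def by auto
  show ?case
  proof (cases "f = v")
    case True
    then have "\<forall>g\<in>set L. g \<bullet> f = 0"
      using Cons.prems(1) unfolding orthonormal_list_def by auto
    then show ?thesis
      using True by (simp add: cl_mult_assoc cl_prod_orthogonal_vec_commute cl_mult_scale_right)
  next
    case False
    then have "f \<in> set L" "v \<bullet> f = 0"
      using Cons.prems unfolding orthonormal_list_def by auto
    have "cl_mult (cl_prod (v # L)) (cl_vec f) =
        (\<lambda>C. - ((-1) ^ length L * cl_mult (cl_mult (cl_vec v) (cl_vec f)) (cl_prod L) C))"
      using Cons.IH[OF L \<open>f \<in> set L\<close>] by (simp add: cl_mult_assoc cl_mult_minus_right cl_mult_scale_right)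
    also have "\<dots> = (\<lambda>C. - ((-1) ^ length (v # L) * cl_mult (cl_vec f) (cl_prod (v # L)) C))"
      unfolding cl_vec_orthogonal_anticommute[OF \<open>v \<bullet> f = 0\<close>]
      by (simp add: cl_mult_minus_left cl_mult_assoc)
    finally show ?thesis .
  qed
qed

lemma cl_prod_span_commute:
  assumes "orthonormal_list L" "p \<in> span (set L)"
  shows "cl_mult (cl_prod L) (cl_vec p) = (\<lambda>C. - ((-1) ^ length L * cl_mult (cl_vec p) (cl_prod L) C))"
  using assms(2)
proof (induction rule: span_induct)
  case (step f)
  then show ?case using cl_prod_member_commute[OF assms(1)] by simp
next
  case base
  show ?case unfolding subspace_def
    by (auto simp: cl_vec_zero cl_vec_add cl_vec_scaleR cl_mult_add_left cl_mult_add_right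
      cl_mult_scale_left cl_mult_scale_right algebra_simps)
qed

lemma cl_prod_orthogonal_commute:
  assumes "\<forall>v\<in>set P. \<forall>w\<in>set Q. v \<bullet> w = 0"
  shows "cl_mult (cl_prod P) (cl_prod Q) = (\<lambda>C. (-1) ^ (length P * length Q) * cl_mult (cl_prod Q) (cl_prod P) C)"
  using assms
proof (induction P)
  case Nil
  then show ?case by simp
next
  case (Cons v P)
  then have IH: "cl_mult (cl_prod P) (cl_prod Q) = (\<lambda>C. (-1) ^ (length P * length Q) * cl_mult (cl_prod Q) (cl_prod P) C)"
    and "\<forall>w\<in>set Q. w \<bullet> v = 0" by (auto simp: inner_commute)
  have vQ: "cl_mult (cl_vec v) (cl_prod Q) = (\<lambda>C. (-1) ^ length Q * cl_mult (cl_prod Q) (cl_vec v) C)"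
    using \<open>\<forall>w\<in>set Q. w \<bullet> v = 0\<close> by (simp add: cl_prod_orthogonal_vec_commute)
  have "cl_mult (cl_prod (v # P)) (cl_prod Q) =
      (\<lambda>C. (-1) ^ (length P * length Q) * cl_mult (cl_mult (cl_vec v) (cl_prod Q)) (cl_prod P) C)"
    by (simp add: cl_mult_assoc IH cl_mult_scale_right)
  also have "\<dots> = (\<lambda>C. (-1) ^ (length (v # P) * length Q) * cl_mult (cl_prod Q) (cl_prod (v # P)) C)"
    unfolding vQ by (simp add: cl_mult_scale_left cl_mult_assoc power_add mult_ac)
  finally show ?case .
qed

lemma cl_prod_mult_rev:
  assumes "\<forall>v\<in>set L. norm v = 1"
  shows "cl_mult (cl_prod L) (cl_prod (rev L)) = (\<lambda>C. (-1) ^ length L * cl_one C)"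
  using assms
proof (induction L)
  case Nil
  then show ?case by simp
next
  case (Cons v L)
  then have IH: "cl_mult (cl_prod L) (cl_prod (rev L)) = (\<lambda>C. (-1) ^ length L * cl_one C)"
    and "norm v = 1" by auto
  have "cl_mult (cl_prod (v # L)) (cl_prod (rev (v # L))) =
      cl_mult (cl_vec v) (cl_mult (cl_mult (cl_prod L) (cl_prod (rev L))) (cl_vec v))"
    by (simp add: cl_prod_append cl_mult_assoc)
  also have "\<dots> = (\<lambda>C. (-1) ^ length (v # L) * cl_one C)"
    unfolding IH by (simp add: cl_mult_scale_left cl_mult_scale_right cl_vec_unit_square[OF \<open>norm v = 1\<close>])
  finally show ?case .
qed

lemma cl_prod_nonzero:
  assumes "\<forall>v\<in>set L. norm v = 1"
  shows "cl_prod L \<noteq> (\<lambda>A. 0)"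
proof
  assume "cl_prod L = (\<lambda>A. 0)"
  then have "cl_mult (cl_prod L) (cl_prod (rev L)) {} = 0" by simp
  then show False
    using cl_prod_mult_rev[OF assms] by (simp add: cl_one_def)
qed

section \<open>Involutions in the Pin group\<close>

lemma cl_prod_intertwines:
  assumes "transpose M = M" "M ** M = mat 1" "orthonormal_list L" "span (set L) = eigenspace M (-1)"
  shows "cl_mult (cl_alpha (cl_prod L)) (cl_vec w) = cl_mult (cl_vec (M *v w)) (cl_prod L)"
proof -
  define p where "p = (1/2) *\<^sub>R (w - M *v w)"
  define q where "q = (1/2) *\<^sub>R (w + M *v w)"
  have "w = p + q"
    by (simp add: p_def q_def vec_eq_iff field_simps)
  have p: "p \<in> eigenspace M (-1)" and q: "q \<in> eigenspace M 1"
    unfolding p_def q_def by (rule involution_eigenvectors[OF assms(2)])+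
  have "\<forall>f\<in>set L. f \<bullet> q = 0"
    using assms(4) q span_base[of _ "set L"] eigenspace_orthogonal[OF assms(1)] by fastforce
  then have Lq: "cl_mult (cl_prod L) (cl_vec q) = (\<lambda>C. (-1) ^ length L * cl_mult (cl_vec q) (cl_prod L) C)"
    by (rule cl_prod_orthogonal_vec_commute)
  have Lp: "cl_mult (cl_prod L) (cl_vec p) = (\<lambda>C. - ((-1) ^ length L * cl_mult (cl_vec p) (cl_prod L) C))"
    using p assms(4) by (intro cl_prod_span_commute[OF assms(3)]) auto
  have sq: "(-1::real) ^ length L * (-1) ^ length L = 1"
    by (simp flip: power_add add: mult_2[symmetric] power_mult)
  have Mw: "M *v w = q - p"
    using p q unfolding \<open>w = p + q\<close> eigenspace_def by (simp add: matrix_vector_right_distrib)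
  show ?thesis
    unfolding Mw unfolding cl_alpha_cl_prod \<open>w = p + q\<close> cl_vec_add cl_vec_diff cl_mult_scale_left cl_mult_add_right
      cl_mult_diff_left Lp Lq
    by (simp add: algebra_simps sq flip: mult.assoc)
qed

text \<open>\<open>c\<close> and \<open>cl_prod L\<close> have the same twisted adjoint action, so
  \<open>c * cl_prod (rev L)\<close> is twisted-central and hence a scalar.\<close>
lemma pin_involution_eq_scaled_cl_prod:
  assumes "pin c" "cl_mult c c = cl_one" "cl_rho c = M"
    and "transpose M = M" "M ** M = mat 1" "orthonormal_list L" "span (set L) = eigenspace M (-1)"
  obtains \<mu> where "\<mu> \<noteq> 0" "c = (\<lambda>A. \<mu> * cl_prod L A)"
proof -
  define y where "y = cl_prod (rev L)"
  define z where "z = cl_mult c y"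
  have "orthonormal_list (rev L)"
    using assms(6) by (simp add: orthonormal_list_def)
  then have y: "cl_mult (cl_alpha y) (cl_vec w) = cl_mult (cl_vec (M *v w)) y" for w
    unfolding y_def using assms(4,5,7) by (intro cl_prod_intertwines) auto
  have "cl_mult (cl_alpha z) (cl_vec (axis j 1)) = cl_mult (cl_vec (axis j 1)) z" for j
    unfolding z_def cl_alpha_mult cl_mult_assoc y
    by (simp add: cl_rho_involution_intertwines[OF assms(1-3)] matrix_vector_mul_assoc assms(5)
      flip: cl_mult_assoc)
  then have z_scalar: "z = (\<lambda>A. z {} * cl_one A)"
    by (rule twisted_central_eq_scalar)
  have "cl_mult y (cl_prod L) = (\<lambda>C. (-1) ^ length L * cl_one C)"
    unfolding y_def using cl_prod_mult_rev[of "rev L"] assms(6)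
    by (simp add: orthonormal_list_def)
  then have zL: "cl_mult z (cl_prod L) = (\<lambda>C. (-1) ^ length L * c C)"
    unfolding z_def cl_mult_assoc by (simp add: cl_mult_scale_right)
  have zL': "cl_mult z (cl_prod L) = (\<lambda>C. z {} * cl_prod L C)"
    by (subst z_scalar) (simp add: cl_mult_scale_left)
  define \<mu> where "\<mu> = (-1) ^ length L * z {}"
  have c_eq: "c = (\<lambda>A. \<mu> * cl_prod L A)"
  proof
    fix X
    have "(-1) ^ length L * c X = z {} * cl_prod L X"
      using fun_cong[OF zL, of X] fun_cong[OF zL', of X] by simp
    then have "((-1) ^ length L * (-1) ^ length L) * c X = (-1) ^ length L * z {} * cl_prod L X"
      by (simp only: mult.assoc)
    then show "c X = \<mu> * cl_prod L X"
      unfolding \<mu>_def by (simp flip: power_add add: mult_2[symmetric] power_mult)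
  qed
  moreover have "\<mu> \<noteq> 0"
  proof
    assume "\<mu> = 0"
    then have "cl_mult c c {} = 0"
      by (simp add: c_eq)
    then show False
      using assms(2) by (simp add: cl_one_def)
  qed
  ultimately show thesis
    by (rule that[rotated])
qed

lemma cl_prod_append_swap:
  assumes "orthonormal_list (A @ B @ C)"
  shows "cl_mult (cl_prod (A @ B)) (cl_prod (A @ C)) =
      (\<lambda>X. (-1) ^ (length A * length B) * cl_prod (A @ A @ B @ C) X)"
    "cl_mult (cl_prod (A @ C)) (cl_prod (A @ B)) =
      (\<lambda>X. (-1) ^ (length A * length C + length B * length C) * cl_prod (A @ A @ B @ C) X)"
proof -
  let ?a = "length A" and ?b = "length B" and ?c = "length C"
  have "orthonormal_list (B @ C)"
    using assms unfolding orthonormal_list_def by auto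
  then have orth: "\<forall>v\<in>set B. \<forall>w\<in>set A. v \<bullet> w = 0" "\<forall>v\<in>set C. \<forall>w\<in>set A. v \<bullet> w = 0"
    "\<forall>v\<in>set C. \<forall>w\<in>set B. v \<bullet> w = 0"
    using orthonormal_list_append_orthogonal[OF assms] orthonormal_list_append_orthogonal
    by (metis inner_commute Un_iff set_append)+
  have BA: "cl_mult (cl_prod B) (cl_prod A) = (\<lambda>X. (-1) ^ (?b * ?a) * cl_mult (cl_prod A) (cl_prod B) X)"
    by (rule cl_prod_orthogonal_commute[OF orth(1)])
  have CA: "cl_mult (cl_prod C) (cl_prod A) = (\<lambda>X. (-1) ^ (?c * ?a) * cl_mult (cl_prod A) (cl_prod C) X)"
    by (rule cl_prod_orthogonal_commute[OF orth(2)])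
  have CB: "cl_mult (cl_prod C) (cl_prod B) = (\<lambda>X. (-1) ^ (?c * ?b) * cl_mult (cl_prod B) (cl_prod C) X)"
    by (rule cl_prod_orthogonal_commute[OF orth(3)])
  have "cl_mult (cl_prod (A @ B)) (cl_prod (A @ C)) =
      cl_mult (cl_prod A) (cl_mult (cl_mult (cl_prod B) (cl_prod A)) (cl_prod C))"
    by (simp add: cl_prod_append cl_mult_assoc)
  also have "\<dots> = (\<lambda>X. (-1) ^ (?a * ?b) * cl_prod (A @ A @ B @ C) X)"
    unfolding BA
    by (simp add: cl_mult_scale_left cl_mult_scale_right cl_prod_append cl_mult_assoc mult.commute[of ?b ?a])
  finally show "cl_mult (cl_prod (A @ B)) (cl_prod (A @ C)) = (\<lambda>X. (-1) ^ (?a * ?b) * cl_prod (A @ A @ B @ C) X)" .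
  have "cl_mult (cl_prod (A @ C)) (cl_prod (A @ B)) =
      cl_mult (cl_prod A) (cl_mult (cl_mult (cl_prod C) (cl_prod A)) (cl_prod B))"
    by (simp add: cl_prod_append cl_mult_assoc)
  also have "\<dots> = (\<lambda>X. (-1) ^ (?a * ?c) * cl_mult (cl_prod A) (cl_mult (cl_prod A) (cl_mult (cl_prod C) (cl_prod B))) X)"
    unfolding CA by (simp add: cl_mult_scale_left cl_mult_scale_right cl_mult_assoc mult.commute[of ?c ?a])
  also have "\<dots> = (\<lambda>X. (-1) ^ (?a * ?c + ?b * ?c) * cl_prod (A @ A @ B @ C) X)"
    unfolding CB
    by (simp add: cl_mult_scale_right cl_prod_append power_add mult.commute[of ?c ?b] mult.assoc)
  finally show "cl_mult (cl_prod (A @ C)) (cl_prod (A @ B)) =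
      (\<lambda>X. (-1) ^ (?a * ?c + ?b * ?c) * cl_prod (A @ A @ B @ C) X)" .
qed

lemma scaled_cl_prod_commute_iff:
  assumes "orthonormal_list (A @ B @ C)" "\<mu> \<noteq> 0" "\<nu> \<noteq> 0"
  shows "cl_mult (\<lambda>X. \<mu> * cl_prod (A @ B) X) (\<lambda>X. \<nu> * cl_prod (A @ C) X) =
      cl_mult (\<lambda>X. \<nu> * cl_prod (A @ C) X) (\<lambda>X. \<mu> * cl_prod (A @ B) X) \<longleftrightarrow>
    even (length A * length B + length A * length C + length B * length C)"
proof -
  let ?a = "length A" and ?b = "length B" and ?c = "length C" and ?Z = "cl_prod (A @ A @ B @ C)"
  have "\<forall>v\<in>set (A @ A @ B @ C). norm v = 1"
    using assms(1) unfolding orthonormal_list_def by auto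
  then obtain X0 where "?Z X0 \<noteq> 0"
    using cl_prod_nonzero by blast
  have "cl_mult (\<lambda>X. \<mu> * cl_prod (A @ B) X) (\<lambda>X. \<nu> * cl_prod (A @ C) X) =
      cl_mult (\<lambda>X. \<nu> * cl_prod (A @ C) X) (\<lambda>X. \<mu> * cl_prod (A @ B) X) \<longleftrightarrow>
      (\<lambda>X. (\<mu> * \<nu> * ?Z X) * (-1) ^ (?a * ?b)) = (\<lambda>X. (\<mu> * \<nu> * ?Z X) * (-1) ^ (?a * ?c + ?b * ?c))"
    by (simp add: cl_mult_scale_left cl_mult_scale_right cl_prod_append_swap[OF assms(1)] mult_ac)
  also have "\<dots> \<longleftrightarrow> (-1::real) ^ (?a * ?b) = (-1) ^ (?a * ?c + ?b * ?c)"
  proof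
    assume "(\<lambda>X. (\<mu> * \<nu> * ?Z X) * (-1) ^ (?a * ?b)) = (\<lambda>X. (\<mu> * \<nu> * ?Z X) * (-1) ^ (?a * ?c + ?b * ?c))"
    then have "(\<mu> * \<nu> * ?Z X0) * (-1) ^ (?a * ?b) = (\<mu> * \<nu> * ?Z X0) * (-1) ^ (?a * ?c + ?b * ?c)"
      by (rule fun_cong)
    then show "(-1::real) ^ (?a * ?b) = (-1) ^ (?a * ?c + ?b * ?c)"
      using assms(2,3) \<open>?Z X0 \<noteq> 0\<close> by simp
  qed simp
  also have "\<dots> \<longleftrightarrow> even (?a * ?b + ?a * ?c + ?b * ?c)"
    by (cases "even (?a * ?b)"; cases "even (?a * ?c + ?b * ?c)") auto
  finally show ?thesis .
qed

lemma even_iff_double_eq_four_int: "even b \<longleftrightarrow> (\<exists>m::int. 2 * real b = 4 * of_int m)"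
proof
  assume "even b"
  then obtain t where "b = 2 * t" by blast
  then show "\<exists>m::int. 2 * real b = 4 * of_int m"
    by (intro exI[of _ "int t"]) simp
next
  assume "\<exists>m::int. 2 * real b = 4 * of_int m"
  then obtain m :: int where "2 * real b = 4 * of_int m" by blast
  then have "int b = 2 * m" by linarith
  then show "even b" by presburger
qed

theorem pin_involutions_commute_iff:
  fixes M N :: "real^('d::{finite,linorder})^('d::{finite,linorder})" and c d :: "'d cliff"
  assumes "transpose M = M" "transpose N = N" "M ** M = mat 1" "N ** N = mat 1" "M ** N = N ** M"
    and "pin c" "cl_mult c c = cl_one" "cl_rho c = M"
    and "pin d" "cl_mult d d = cl_one" "cl_rho d = N"
    and "trace M = trace N"
  shows "cl_mult c d = cl_mult d c \<longleftrightarrow> (\<exists>m::int. (real CARD('d) - trace (M ** N)) / 2 = 4 * of_int m)"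
proof -
  obtain A B C where ABC: "orthonormal_list (A @ B @ C)"
    and span: "span (set (A @ B)) = eigenspace M (-1)" "span (set (A @ C)) = eigenspace N (-1)"
      "span (set (B @ C)) = eigenspace (M ** N) (-1)"
    using symmetric_involutions_eigenbases[OF assms(1-5)] by blast
  have AB: "orthonormal_list (A @ B)" and AC: "orthonormal_list (A @ C)" and BC: "orthonormal_list (B @ C)"
    using ABC unfolding orthonormal_list_def by auto
  obtain \<mu> where "\<mu> \<noteq> 0" "c = (\<lambda>X. \<mu> * cl_prod (A @ B) X)"
    using pin_involution_eq_scaled_cl_prod[OF assms(6-8,1,3) AB span(1)] by blast
  moreover obtain \<nu> where "\<nu> \<noteq> 0" "d = (\<lambda>X. \<nu> * cl_prod (A @ C) X)"
    using pin_involution_eq_scaled_cl_prod[OF assms(9-11,2,4) AC span(2)] by blast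
  ultimately have commute_iff: "cl_mult c d = cl_mult d c \<longleftrightarrow>
      even (length A * length B + length A * length C + length B * length C)"
    using scaled_cl_prod_commute_iff[OF ABC] by simp
  note MN = commuting_symmetric_involutions_mult[OF assms(1-5)]
  have "trace M = real CARD('d) - 2 * real (length A + length B)"
    using trace_symmetric_involution[OF assms(1,3) AB span(1)] by simp
  moreover have "trace N = real CARD('d) - 2 * real (length A + length C)"
    using trace_symmetric_involution[OF assms(2,4) AC span(2)] by simp
  moreover have "trace (M ** N) = real CARD('d) - 2 * real (length B + length C)"
    using trace_symmetric_involution[OF MN BC span(3)] by simp
  ultimately have "length C = length B" and h: "(real CARD('d) - trace (M ** N)) / 2 = 2 * real (length B)"
    using assms(12) by simp_all
  have "cl_mult c d = cl_mult d c \<longleftrightarrow> even (length B)"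
    unfolding commute_iff \<open>length C = length B\<close> by (simp add: even_add)
  also have "\<dots> \<longleftrightarrow> (\<exists>m::int. 2 * real (length B) = 4 * of_int m)"
    by (rule even_iff_double_eq_four_int)
  finally show ?thesis
    unfolding h .
qed

section \<open>Adjacent transpositions in a representation of the symmetric group\<close>

lemma adj_transp_permutes:
  assumes "1 \<le> i" "i + 1 \<le> n"
  shows "adj_transp i permutes {1..n}"
proof -
  have "adj_transp i = Transposition.transpose i (i + 1)"
    unfolding adj_transp_def Transposition.transpose_def by (auto simp: fun_eq_iff)
  then show ?thesis
    using assms permutes_swap_id[of i "{1..n}" "i + 1"] by simp
qed

lemma adj_transp_involution: "adj_transp i \<circ> adj_transp i = id"
  unfolding adj_transp_def by (auto simp: fun_eq_iff)

lemma adj_transp_commute: "i + 1 < k \<or> k + 1 < i \<Longrightarrow> adj_transp i \<circ> adj_transp k = adj_transp k \<circ> adj_transp i"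
  unfolding adj_transp_def by (auto simp: fun_eq_iff)

lemma inj_on_extend_permutes:
  assumes "finite S" "A \<subseteq> S" "inj_on f A" "f ` A \<subseteq> S"
  obtains g where "g permutes S" "\<And>x. x \<in> A \<Longrightarrow> g x = f x"
proof -
  have "card (S - A) = card (S - f ` A)"
    using assms finite_subset[OF assms(2,1)] by (simp add: card_Diff_subset card_image)
  then obtain h where h: "bij_betw h (S - A) (S - f ` A)"
    using finite_same_card_bij[of "S - A" "S - f ` A"] assms(1) by auto
  define g where "g x = (if x \<in> A then f x else if x \<in> S then h x else x)" for x
  have "bij_betw g A (f ` A)"
    using assms(3) unfolding bij_betw_def inj_on_def g_def by (auto simp: image_def)
  moreover have "bij_betw g (S - A) (S - f ` A)"
    using h unfolding g_def by (rule bij_betw_cong[THEN iffD1, rotated]) auto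
  ultimately have "bij_betw g (A \<union> (S - A)) (f ` A \<union> (S - f ` A))"
    by (rule bij_betw_combine) auto
  moreover have "A \<union> (S - A) = S" "f ` A \<union> (S - f ` A) = S"
    using assms(2,4) by auto
  ultimately have "g permutes S"
    by (intro bij_imp_permutes) (auto simp: g_def)
  then show thesis
    by (rule that) (simp add: g_def)
qed

lemma adj_transp_conjugate:
  assumes "1 \<le> i" "i + 1 \<le> n" "1 \<le> k" "k + 1 \<le> n" "i + 1 < k \<or> k + 1 < i"
  obtains g where "g permutes {1..n}" "adj_transp i \<circ> g = g \<circ> adj_transp 1" "adj_transp k \<circ> g = g \<circ> adj_transp 3"
proof -
  define f where "f x = (if x = 1 then i else if x = 2 then i + 1 else if x = 3 then k else k + 1)" for x :: nat
  have "n \<ge> 4" using assms by linarith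
  have "inj_on f {1, 2, 3, 4}" "f ` {1, 2, 3, 4} \<subseteq> {1..n}" "{1, 2, 3, 4} \<subseteq> {1..n}"
    unfolding f_def inj_on_def using assms \<open>n \<ge> 4\<close> by auto
  then obtain g where g: "g permutes {1..n}" "\<And>x. x \<in> {1, 2, 3, 4} \<Longrightarrow> g x = f x"
    using inj_on_extend_permutes[of "{1..n}" "{1, 2, 3, 4}" f] by auto
  have g_vals: "g 1 = i" "g 2 = i + 1" "g 3 = k" "g 4 = k + 1"
    using g(2) unfolding f_def by auto
  have inj: "g x = g y \<longleftrightarrow> x = y" for x y
    using permutes_inj[OF g(1)] by (auto dest: injD)
  have "adj_transp i (g x) = g (adj_transp 1 x)" for x
  proof -
    have "x \<noteq> 1 \<Longrightarrow> g x \<noteq> i" "x \<noteq> 2 \<Longrightarrow> g x \<noteq> i + 1"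
      using inj[of x 1] inj[of x 2] g_vals by auto
    then show ?thesis
      unfolding adj_transp_def using g_vals by (auto simp: eval_nat_numeral)
  qed
  moreover have "adj_transp k (g x) = g (adj_transp 3 x)" for x
  proof -
    have "x \<noteq> 3 \<Longrightarrow> g x \<noteq> k" "x \<noteq> 4 \<Longrightarrow> g x \<noteq> k + 1"
      using inj[of x 3] inj[of x 4] g_vals by auto
    then show ?thesis
      unfolding adj_transp_def using g_vals by (auto simp: eval_nat_numeral)
  qed
  ultimately show thesis
    using g(1) by (intro that) (auto simp: fun_eq_iff)
qed

lemma orth_rep_mult:
  "orth_rep n \<pi> \<Longrightarrow> p permutes {1..n} \<Longrightarrow> q permutes {1..n} \<Longrightarrow> \<pi> (p \<circ> q) = \<pi> p ** \<pi> q"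
  unfolding orth_rep_def by blast

lemma orth_rep_id:
  assumes "orth_rep n \<pi>"
  shows "\<pi> id = mat 1"
proof -
  have "transpose (\<pi> id) ** \<pi> id = mat 1"
    using assms permutes_id unfolding orth_rep_def orthogonal_matrix_def by blast
  moreover have "\<pi> id = \<pi> id ** \<pi> id"
    using orth_rep_mult[OF assms permutes_id permutes_id] by simp
  ultimately show ?thesis
    by (metis matrix_mul_assoc matrix_mul_lid)
qed

lemma orth_rep_involution:
  assumes "orth_rep n \<pi>" "p permutes {1..n}" "p \<circ> p = id"
  shows "\<pi> p ** \<pi> p = mat 1" "transpose (\<pi> p) = \<pi> p"
proof -
  show sq: "\<pi> p ** \<pi> p = mat 1"
    using orth_rep_mult[OF assms(1,2,2)] assms(3) orth_rep_id[OF assms(1)] by simp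
  have "transpose (\<pi> p) ** \<pi> p = mat 1"
    using assms(1,2) unfolding orth_rep_def orthogonal_matrix_def by blast
  then show "transpose (\<pi> p) = \<pi> p"
    by (metis sq matrix_mul_assoc matrix_mul_lid matrix_mul_rid)
qed

lemma orth_rep_trace_conjugate:
  assumes "orth_rep n \<pi>" "g permutes {1..n}" "p permutes {1..n}" "q permutes {1..n}" "q \<circ> g = g \<circ> p"
  shows "trace (\<pi> q) = trace (\<pi> p)"
proof -
  have inv: "inv g permutes {1..n}"
    by (rule permutes_inv[OF assms(2)])
  have "q = g \<circ> p \<circ> inv g"
    using assms(5) permutes_inv_o(1)[OF assms(2)] by (metis comp_assoc comp_id)
  then have "\<pi> q = \<pi> g ** (\<pi> p ** \<pi> (inv g))"
    using assms(2,3) inv by (simp add: orth_rep_mult[OF assms(1)] permutes_compose matrix_mul_assoc)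
  then have "trace (\<pi> q) = trace ((\<pi> p ** \<pi> (inv g)) ** \<pi> g)"
    by (simp only: trace_mul_sym[of "\<pi> g"])
  also have "\<dots> = trace (\<pi> p ** (\<pi> (inv g) ** \<pi> g))"
    by (simp only: matrix_mul_assoc)
  also have "\<pi> (inv g) ** \<pi> g = mat 1"
    using orth_rep_mult[OF assms(1) inv assms(2)] permutes_inv_o(2)[OF assms(2)] orth_rep_id[OF assms(1)]
    by simp
  finally show ?thesis by simp
qed

theorem proposition3p3:
  fixes n i k :: nat
    and \<pi> :: "(nat \<Rightarrow> nat) \<Rightarrow> real^('d::{finite,linorder})^('d::{finite,linorder})"
    and ci ck :: "'d cliff"
  assumes "n \<ge> 4"
    and "orth_rep n \<pi>"
    and "1 \<le> i" "i \<le> n - 1" "1 \<le> k" "k \<le> n - 1"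
    and "i + 1 < k \<or> k + 1 < i"
    and "pin ci" "pin ck"
    and "cl_rho ci = \<pi> (adj_transp i)" "cl_rho ck = \<pi> (adj_transp k)"
    and "cl_mult ci ci = cl_one" "cl_mult ck ck = cl_one"
  shows "cl_mult ci ck = cl_mult ck ci \<longleftrightarrow>
    (\<exists>m::int. (character \<pi> id - character \<pi> (adj_transp 1 \<circ> adj_transp 3)) / 2 = 4 * of_int m)"
proof -
  have i: "i + 1 \<le> n" and k: "k + 1 \<le> n" and "k + 1 < i \<or> i + 1 < k"
    using assms(1,4,6,7) by auto
  have P: "adj_transp i permutes {1..n}" "adj_transp k permutes {1..n}"
    "adj_transp 1 permutes {1..n}" "adj_transp 3 permutes {1..n}"
    using adj_transp_permutes[of i n] adj_transp_permutes[of k n] adj_transp_permutes[of 1 n]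
      adj_transp_permutes[of 3 n] assms(1,3,5) i k by simp_all
  obtain g where g: "g permutes {1..n}" "adj_transp i \<circ> g = g \<circ> adj_transp 1" "adj_transp k \<circ> g = g \<circ> adj_transp 3"
    using adj_transp_conjugate[OF assms(3) i assms(5) k assms(7)] .
  obtain g' where g': "g' permutes {1..n}" "adj_transp k \<circ> g' = g' \<circ> adj_transp 1"
    using adj_transp_conjugate[OF assms(5) k assms(3) i \<open>k + 1 < i \<or> i + 1 < k\<close>] .
  have tr: "trace (\<pi> (adj_transp i)) = trace (\<pi> (adj_transp k))"
    using orth_rep_trace_conjugate[OF assms(2) g(1) P(3,1) g(2)]
      orth_rep_trace_conjugate[OF assms(2) g'(1) P(3,2) g'(2)] by simp
  have "(adj_transp i \<circ> adj_transp k) \<circ> g = g \<circ> (adj_transp 1 \<circ> adj_transp 3)"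
    using g(2,3) by (simp add: fun_eq_iff)
  then have char_s1s3: "character \<pi> (adj_transp 1 \<circ> adj_transp 3) = trace (\<pi> (adj_transp i) ** \<pi> (adj_transp k))"
    unfolding character_def orth_rep_mult[OF assms(2) P(1,2), symmetric]
    by (rule orth_rep_trace_conjugate[OF assms(2) g(1) permutes_compose[OF P(4,3)] permutes_compose[OF P(2,1)], symmetric])
  have char_id: "character \<pi> id = real CARD('d)"
    unfolding character_def orth_rep_id[OF assms(2)] by (simp add: trace_I)
  have comm: "\<pi> (adj_transp i) ** \<pi> (adj_transp k) = \<pi> (adj_transp k) ** \<pi> (adj_transp i)"
    using adj_transp_commute[OF assms(7)] by (simp flip: orth_rep_mult[OF assms(2) P(1,2)] orth_rep_mult[OF assms(2) P(2,1)])
  note inv_i = orth_rep_involution[OF assms(2) P(1) adj_transp_involution]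
  note inv_k = orth_rep_involution[OF assms(2) P(2) adj_transp_involution]
  show ?thesis
    unfolding char_id char_s1s3
    by (rule pin_involutions_commute_iff[OF inv_i(2) inv_k(2) inv_i(1) inv_k(1) comm assms(8,12,10) assms(9,13,11) tr])
qed

end
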